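(* Let $n,q$ be positive integers, $\sigma>0$, $s>0$, $\mu=s^2/\sigma^2$, and let $h(\mathbf X\mid\hat{\mathbf W})$ be the average differential entropy of the Gaussian mixture described in the context. Let $F(\mathbf z_1,\dots,\mathbf z_q)=\ln q^{-1}\sum_{l=1}^q\exp\{-\frac\mu2\mathbf z_l\cdot\mathbf z_l\}$ and let $\hat M^{(q)}$ be the $q\times q$ matrix with entries $M^{(q)}_{ij}=\delta_{ij}-\frac1q+\mu\,\delta_{iq}\delta_{jq}$. Then $$h(\mathbf X\mid\hat{\mathbf W})=\frac n2\ln2\pi\sigma^2-\Big(\frac\mu q\Big)^{n/2}(2\pi)^{-qn/2}\int\exp\Big\{-\frac12\hat{\mathbf z}^{\mathrm T}\hat M^{(q)}\hat{\mathbf z}\Big\}F(\mathbf z_1,\dots,\mathbf z_q)\,d\mathbf z_1\cdots d\mathbf z_q.$$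
   Context: $\mathbf W_1,\dots,\mathbf W_q$ are i.i.d. Gaussian in $\mathbb R^n$ with mean $0$, covariance $s^2\mathbf 1_n$; given $\hat{\mathbf W}=\hat{\mathbf w}=(\mathbf w_1,\dots,\mathbf w_q)$, $\mathbf X\in\mathbb R^n$ has density $(2\pi\sigma^2)^{-n/2}\frac1q\sum_{j=1}^q\exp\{-\|\mathbf x-\mathbf w_j\|^2/(2\sigma^2)\}$; $h(\mathbf X\mid\hat{\mathbf W})=\mathbb E_{\hat{\mathbf w}}[h(\mathbf X\mid\hat{\mathbf W}=\hat{\mathbf w})]$ with $h$ the differential entropy (natural log). The integral is over $(\mathbb R^n)^q$, $\hat{\mathbf z}=(\mathbf z_1,\dots,\mathbf z_q)$, and $\hat{\mathbf z}^{\mathrm T}\hat M\hat{\mathbf z}:=\sum_{i,j}M_{ij}\,\mathbf z_i\cdot\mathbf z_j$. *)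

theory Defs
  imports "HOL-Probability.Probability"
begin

text \<open>Conditional density of X in R^n given the centres w = (w_1,...,w_q):
  an equal-weight mixture of q isotropic Gaussians of variance sigma^2.
  R^n is real^'n (n = CARD('n)), the index set {1..q} is the finite type 'q.\<close>
definition mix_density :: "real \<Rightarrow> (real^'n::finite)^'q::finite \<Rightarrow> real^'n \<Rightarrow> real" where
  "mix_density \<sigma> w x =
     (2 * pi * \<sigma>\<^sup>2) powr (- real CARD('n) / 2) *
     ((1 / real CARD('q)) * (\<Sum>j\<in>UNIV. exp (- (norm (x - w $ j))\<^sup>2 / (2 * \<sigma>\<^sup>2))))"

definition diff_entropy :: "(real^'n::finite \<Rightarrow> real) \<Rightarrow> real" where
  "diff_entropy f = - (\<integral>x. f x * ln (f x) \<partial>lborel)"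

definition centres_density :: "real \<Rightarrow> (real^'n::finite)^'q::finite \<Rightarrow> real" where
  "centres_density s w = (\<Prod>j\<in>UNIV. \<Prod>k\<in>UNIV. normal_density 0 s (w $ j $ k))"

definition cond_entropy :: "real \<Rightarrow> real \<Rightarrow> 'n::finite itself \<Rightarrow> 'q::finite itself \<Rightarrow> real" where
  "cond_entropy \<sigma> s (_ :: 'n itself) (_ :: 'q itself) =
     (\<integral>w. centres_density s (w :: (real^'n)^'q) * diff_entropy (mix_density \<sigma> w) \<partial>lborel)"

text \<open>The matrix M^(q) with distinguished (q-th) index jq.\<close>
definition Mq :: "real \<Rightarrow> 'q::finite \<Rightarrow> 'q \<Rightarrow> 'q \<Rightarrow> real" where
  "Mq \<mu> jq i j = (if i = j then 1 else 0) - 1 / real CARD('q)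
      + \<mu> * (if i = jq \<and> j = jq then 1 else 0)"

definition Fq :: "real \<Rightarrow> (real^'n::finite)^'q::finite \<Rightarrow> real" where
  "Fq \<mu> z = ln ((1 / real CARD('q)) * (\<Sum>l\<in>UNIV. exp (- (\<mu> / 2) * (z $ l \<bullet> z $ l))))"

definition quad_form :: "('q::finite \<Rightarrow> 'q \<Rightarrow> real) \<Rightarrow> (real^'n::finite)^'q \<Rightarrow> real" where
  "quad_form M z = (\<Sum>i\<in>UNIV. \<Sum>j\<in>UNIV. M i j * (z $ i \<bullet> z $ j))"

end

theory Submission
  imports Defs
begin

(* Write the mixture density as (2 pi sigma^2)^(-n/2) K_w(x) with
   K_w(x) = q^-1 sum_j exp (-|x - w_j|^2 / (2 sigma^2)).  Its entropy is n/2 ln (2 pi sigma^2) plus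
   the excess integral of p_w (-ln K_w), which is bounded uniformly in w.  To average the excess
   over the Gaussian centres, substitute w_l = x - s y_l in the double integral over (w, x): then
   ln K_w(x) = F(y), and completing the square splits the density of the centres into a Gaussian
   in x around (s/q) sum_l y_l times exp (-(1/2) sum_l |y_l - ybar|^2).  Integrating out x, the j-th
   mixture component leaves exp (-(1/2) y^T M_j y) (-F(y)), where M_j carries mu in its j-th
   diagonal entry.  Permuting the y_l moves j to any fixed index, so all q components contribute
   the same integral. *)

section \<open>Gaussian densities on Euclidean spaces\<close>

lemma power2_norm_eq_sum_Basis:
  fixes x :: "'a::euclidean_space"
  shows "(norm x)\<^sup>2 = (\<Sum>b\<in>Basis. (x \<bullet> b)\<^sup>2)"
  unfolding power2_norm_eq_inner by (subst euclidean_inner) (simp add: power2_eq_square)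

lemma inverse_sqrt_power_eq_powr:
  fixes x :: real
  assumes "x > 0"
  shows "(1 / sqrt x) ^ n = x powr (- real n / 2)"
proof -
  have "(1 / sqrt x) ^ n = 1 / (x powr (1 / 2)) ^ n"
    using assms by (simp add: powr_half_sqrt power_one_over)
  also have "\<dots> = 1 / x powr (real n / 2)"
    using assms by (simp add: powr_power)
  finally show ?thesis
    by (simp add: powr_minus_divide)
qed

definition gauss_density :: "real \<Rightarrow> 'a::euclidean_space \<Rightarrow> 'a \<Rightarrow> real" where
  "gauss_density a t x = (2 * pi * a\<^sup>2) powr (- real DIM('a) / 2) * exp (- (norm (x - t))\<^sup>2 / (2 * a\<^sup>2))"

lemma gauss_density_pos: "a \<noteq> 0 \<Longrightarrow> gauss_density a t x > 0"
  by (simp add: gauss_density_def)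

lemma continuous_on_gauss_density [continuous_intros]:
  "continuous_on S f \<Longrightarrow> continuous_on S g \<Longrightarrow> continuous_on S (\<lambda>p. gauss_density a (f p) (g p))"
  unfolding gauss_density_def divide_inverse by (intro continuous_intros)

lemma borel_measurable_gauss_density [measurable]:
  "gauss_density a (t::'a::euclidean_space) \<in> borel_measurable borel"
  by (intro borel_measurable_continuous_onI continuous_intros)

lemma gauss_density_eq_prod_normal_density:
  fixes t x :: "'a::euclidean_space"
  assumes "a > 0"
  shows "gauss_density a t x = (\<Prod>b\<in>Basis. normal_density (t \<bullet> b) a (x \<bullet> b))"
proof -
  define c where "c = 1 / sqrt (2 * pi * a\<^sup>2)"
  have "normal_density (t \<bullet> b) a (x \<bullet> b) = c * exp (- ((x - t) \<bullet> b)\<^sup>2 / (2 * a\<^sup>2))" for b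
    by (simp add: normal_density_def c_def inner_diff_left power2_commute)
  then have "(\<Prod>b\<in>Basis. normal_density (t \<bullet> b) a (x \<bullet> b))
      = c ^ DIM('a) * exp (\<Sum>b\<in>Basis. - ((x - t) \<bullet> b)\<^sup>2 / (2 * a\<^sup>2))"
    by (simp add: prod.distrib exp_sum)
  also have "c ^ DIM('a) = (2 * pi * a\<^sup>2) powr (- real DIM('a) / 2)"
    unfolding c_def using assms by (simp add: inverse_sqrt_power_eq_powr)
  also have "(\<Sum>b\<in>Basis. - ((x - t) \<bullet> b)\<^sup>2 / (2 * a\<^sup>2)) = - (norm (x - t))\<^sup>2 / (2 * a\<^sup>2)"
    by (simp add: power2_norm_eq_sum_Basis[of "x - t"] sum_divide_distrib[symmetric] sum_negf)
  finally show ?thesis by (simp add: gauss_density_def)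
qed

lemma nn_integral_gauss_density:
  fixes t :: "'a::euclidean_space"
  assumes "a > 0"
  shows "(\<integral>\<^sup>+x. ennreal (gauss_density a t x) \<partial>lborel) = 1"
proof -
  have "(\<integral>\<^sup>+x. ennreal (gauss_density a t x) \<partial>lborel)
      = (\<integral>\<^sup>+x. (\<Prod>b\<in>Basis. ennreal (normal_density (t \<bullet> b) a (x \<bullet> b))) \<partial>lborel)"
    using assms by (simp add: gauss_density_eq_prod_normal_density prod_ennreal)
  also have "\<dots> = (\<Prod>b\<in>(Basis::'a set). \<integral>\<^sup>+x. ennreal (normal_density (t \<bullet> b) a x) \<partial>lborel)"
    by (rule nn_integral_lborel_prod) auto
  also have "\<dots> = 1"
    using assms by (simp add: nn_integral_eq_integral)
  finally show ?thesis .
qed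

lemma has_bochner_integral_gauss_density:
  "a > 0 \<Longrightarrow> has_bochner_integral lborel (gauss_density a (t::'a::euclidean_space)) 1"
  by (rule has_bochner_integral_nn_integral)
     (auto simp: nn_integral_gauss_density gauss_density_pos less_imp_le measurable_lborel2)

lemma integrable_gauss_density:
  "a > 0 \<Longrightarrow> integrable lborel (gauss_density a (t::'a::euclidean_space))"
  using has_bochner_integral_gauss_density by (auto simp: has_bochner_integral_iff)

lemma integral_gauss_density:
  "a > 0 \<Longrightarrow> (\<integral>x. gauss_density a (t::'a::euclidean_space) x \<partial>lborel) = 1"
  using has_bochner_integral_gauss_density by (auto simp: has_bochner_integral_iff)

lemma exp_minus_mult_le: "(d::real) \<ge> 0 \<Longrightarrow> exp (- d) * d \<le> 2 * exp (- d / 2)"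
proof -
  assume "d \<ge> 0"
  have "d / 2 \<le> exp (d / 2)"
    using exp_ge_add_one_self[of "d / 2"] by linarith
  then have "exp (- d) * d \<le> exp (- d) * (2 * exp (d / 2))"
    using \<open>d \<ge> 0\<close> by (intro mult_left_mono) auto
  also have "\<dots> = 2 * exp (- d / 2)"
    by (simp add: exp_add[symmetric])
  finally show ?thesis .
qed

lemma gauss_density_mult_exponent_le:
  fixes t x :: "'a::euclidean_space"
  assumes "a > 0"
  shows "gauss_density a t x * ((norm (x - t))\<^sup>2 / (2 * a\<^sup>2))
    \<le> 2 * 2 powr (real DIM('a) / 2) * gauss_density (sqrt 2 * a) t x"
proof -
  define d where "d = (norm (x - t))\<^sup>2 / (2 * a\<^sup>2)"
  define c where "c = (2 * pi * a\<^sup>2) powr (- real DIM('a) / 2)"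
  have "gauss_density a t x * d = c * (exp (- d) * d)"
    by (simp add: gauss_density_def c_def d_def)
  also have "\<dots> \<le> c * (2 * exp (- d / 2))"
    using assms by (intro mult_left_mono exp_minus_mult_le) (auto simp: c_def d_def)
  also have "\<dots> = 2 * 2 powr (real DIM('a) / 2) * gauss_density (sqrt 2 * a) t x"
  proof -
    have "2 * pi * (sqrt 2 * a)\<^sup>2 = 2 * (2 * pi * a\<^sup>2)"
      by (simp add: power_mult_distrib)
    then have "(2 * pi * (sqrt 2 * a)\<^sup>2) powr (- real DIM('a) / 2) = 2 powr (- real DIM('a) / 2) * c"
      unfolding c_def by (simp only: powr_mult)
    then have "gauss_density (sqrt 2 * a) t x = 2 powr (- real DIM('a) / 2) * c * exp (- d / 2)"
      by (simp add: gauss_density_def d_def power_mult_distrib)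
    moreover have "2 powr (real DIM('a) / 2) * 2 powr (- real DIM('a) / 2) = 1"
      by (simp add: powr_add[symmetric])
    ultimately show ?thesis
      by (simp add: algebra_simps)
  qed
  finally show ?thesis by (simp add: d_def)
qed

section \<open>Changes of variables for Lebesgue measure\<close>

lemma nn_integral_lborel_affine:
  fixes t :: "'a::euclidean_space" and f :: "'a \<Rightarrow> ennreal"
  assumes [measurable]: "f \<in> borel_measurable borel" and "c \<noteq> 0"
  shows "(\<integral>\<^sup>+x. f x \<partial>lborel) = ennreal (\<bar>c\<bar> ^ DIM('a)) * (\<integral>\<^sup>+y. f (t + c *\<^sub>R y) \<partial>lborel)"
  by (subst lborel_affine[OF \<open>c \<noteq> 0\<close>, of t])
     (simp add: nn_integral_density nn_integral_distr nn_integral_cmult)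

lemma nn_integral_lborel_swap_continuous:
  fixes f :: "'a::euclidean_space \<Rightarrow> 'b::euclidean_space \<Rightarrow> real"
  assumes "continuous_on UNIV (\<lambda>p. f (fst p) (snd p))"
  shows "(\<integral>\<^sup>+y. (\<integral>\<^sup>+x. ennreal (f x y) \<partial>lborel) \<partial>lborel) = (\<integral>\<^sup>+x. (\<integral>\<^sup>+y. ennreal (f x y) \<partial>lborel) \<partial>lborel)"
proof (rule lborel_pair.Fubini')
  have [measurable]: "(\<lambda>p. f (fst p) (snd p)) \<in> borel_measurable borel"
    using assms by (rule borel_measurable_continuous_onI)
  show "(\<lambda>(x, y). ennreal (f x y)) \<in> borel_measurable (lborel \<Otimes>\<^sub>M lborel)"
    unfolding lborel_prod measurable_lborel2 by (simp add: case_prod_beta')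
qed

lemma prod_Basis_vec:
  fixes g :: "'a::euclidean_space^'q::finite \<Rightarrow> 'c::comm_monoid_mult"
  shows "(\<Prod>b\<in>Basis. g b) = (\<Prod>i\<in>UNIV. \<Prod>u\<in>Basis. g (axis i u))"
proof -
  have "(\<Prod>b\<in>Basis. g b) = (\<Prod>i\<in>UNIV. prod g (\<Union>u\<in>Basis. {axis i u}))"
    unfolding Basis_vec_def by (rule prod.UNION_disjoint) (auto simp: axis_eq_axis)
  also have "\<dots> = (\<Prod>i\<in>UNIV. \<Prod>u\<in>Basis. g (axis i u))"
    by (simp add: UNION_singleton_eq_range prod.reindex inj_on_def axis_eq_axis)
  finally show ?thesis .
qed

lemma lborel_permute_vec:
  fixes p :: "'q::finite \<Rightarrow> 'q"
  assumes p: "bij p"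
  shows "distr lborel borel (\<lambda>y::'a::euclidean_space^'q. \<chi> l. y $ p l) = lborel"
proof (rule lborel_eqI[symmetric])
  define T where "T = (\<lambda>y::'a^'q. \<chi> l. y $ p l)"
  define T' where "T' = (\<lambda>y::'a^'q. \<chi> l. y $ inv p l)"
  have [measurable]: "T \<in> borel_measurable borel"
    unfolding T_def by (intro borel_measurable_continuous_onI continuous_intros)
  have p_inv: "p (inv p m) = m" "inv p (p m) = m" for m
    using p by (auto simp: bij_def surj_f_inv_f inv_f_f)
  have mem_box_vec: "x \<in> box a b \<longleftrightarrow> (\<forall>l. \<forall>u\<in>Basis. a$l \<bullet> u < x$l \<bullet> u \<and> x$l \<bullet> u < b$l \<bullet> u)"
    for x a b :: "'a^'q"
    by (auto simp: mem_box Basis_vec_def inner_axis)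
  fix lo up :: "'a^'q"
  assume le: "\<And>b. b \<in> Basis \<Longrightarrow> lo \<bullet> b \<le> up \<bullet> b"
  have "T -` box lo up = box (T' lo) (T' up)"
  proof -
    have "(\<forall>l. \<forall>u\<in>Basis. lo$l \<bullet> u < x$(p l) \<bullet> u \<and> x$(p l) \<bullet> u < up$l \<bullet> u) \<longleftrightarrow>
          (\<forall>m. \<forall>u\<in>Basis. lo$(inv p m) \<bullet> u < x$m \<bullet> u \<and> x$m \<bullet> u < up$(inv p m) \<bullet> u)" for x
      by (metis p_inv)
    then show ?thesis by (auto simp: mem_box_vec T_def T'_def)
  qed
  moreover have "\<forall>b\<in>Basis. T' lo \<bullet> b \<le> T' up \<bullet> b"
  proof -
    have "lo$l \<bullet> u \<le> up$l \<bullet> u" if "u \<in> Basis" for l u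
      using le[of "axis l u"] that by (auto simp: Basis_vec_def inner_axis)
    then show ?thesis by (auto simp: Basis_vec_def inner_axis T'_def)
  qed
  moreover have "(\<Prod>b\<in>Basis. T' z \<bullet> b) = (\<Prod>b\<in>Basis. z \<bullet> b)" for z
  proof -
    have "(\<Prod>i\<in>UNIV. \<Prod>u\<in>Basis. z $ inv p i \<bullet> u) = (\<Prod>i\<in>UNIV. \<Prod>u\<in>Basis. z $ i \<bullet> u)"
      using p by (intro prod.reindex_bij_betw) (simp add: bij_imp_bij_inv)
    then show ?thesis
      by (simp add: prod_Basis_vec inner_axis T'_def)
  qed
  moreover have "T' up - T' lo = T' (up - lo)"
    by (simp add: T'_def vec_eq_iff)
  ultimately show "emeasure (distr lborel borel (\<lambda>y::'a^'q. \<chi> l. y $ p l)) (box lo up)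
      = (\<Prod>b\<in>Basis. (up - lo) \<bullet> b)"
    by (simp add: T_def[symmetric] emeasure_distr emeasure_lborel_box_eq)
qed simp

lemma nn_integral_lborel_permute_vec:
  fixes p :: "'q::finite \<Rightarrow> 'q" and f :: "'a::euclidean_space^'q \<Rightarrow> ennreal"
  assumes "bij p" and [measurable]: "f \<in> borel_measurable borel"
  shows "(\<integral>\<^sup>+y. f (\<chi> l. y $ p l) \<partial>lborel) = (\<integral>\<^sup>+y. f y \<partial>lborel)"
proof -
  have [measurable]: "(\<lambda>y::'a^'q. \<chi> l. y $ p l) \<in> borel_measurable borel"
    by (intro borel_measurable_continuous_onI continuous_intros)
  have "(\<integral>\<^sup>+y. f y \<partial>lborel) = (\<integral>\<^sup>+y. f y \<partial>distr lborel borel (\<lambda>y::'a^'q. \<chi> l. y $ p l))"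
    by (simp add: lborel_permute_vec[OF \<open>bij p\<close>])
  also have "\<dots> = (\<integral>\<^sup>+y. f (\<chi> l. y $ p l) \<partial>lborel)"
    by (rule nn_integral_distr) (auto simp: measurable_lborel2)
  finally show ?thesis ..
qed

section \<open>The entropy of a Gaussian mixture\<close>

definition mix_kernel :: "real \<Rightarrow> (real^'n::finite)^'q::finite \<Rightarrow> real^'n \<Rightarrow> real" where
  "mix_kernel \<sigma> w x = (1 / real CARD('q)) * (\<Sum>j\<in>UNIV. exp (- (norm (x - w $ j))\<^sup>2 / (2 * \<sigma>\<^sup>2)))"

lemma mix_density_eq_kernel:
  fixes w :: "(real^'n::finite)^'q::finite"
  shows "mix_density \<sigma> w x = (2 * pi * \<sigma>\<^sup>2) powr (- real CARD('n) / 2) * mix_kernel \<sigma> w x"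
  by (simp add: mix_density_def mix_kernel_def)

lemma mix_density_eq_mean_gauss_density:
  fixes w :: "(real^'n::finite)^'q::finite"
  shows "mix_density \<sigma> w x = (1 / real CARD('q)) * (\<Sum>j\<in>UNIV. gauss_density \<sigma> (w $ j) x)"
  by (simp add: mix_density_def gauss_density_def sum_distrib_left)

lemma mix_kernel_pos: "mix_kernel \<sigma> w x > 0"
  unfolding mix_kernel_def by (intro mult_pos_pos sum_pos) auto

lemma mix_kernel_le_1:
  fixes w :: "(real^'n::finite)^'q::finite"
  shows "mix_kernel \<sigma> w x \<le> 1"
proof -
  have "(\<Sum>j\<in>UNIV. exp (- (norm (x - w $ j))\<^sup>2 / (2 * \<sigma>\<^sup>2))) \<le> (\<Sum>j\<in>(UNIV::'q set). 1)"
    by (intro sum_mono) simp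
  then show ?thesis
    by (simp add: mix_kernel_def field_simps)
qed

lemma continuous_on_mix_kernel [continuous_intros]:
  "continuous_on S f \<Longrightarrow> continuous_on S g \<Longrightarrow> continuous_on S (\<lambda>p. mix_kernel \<sigma> (f p) (g p))"
  unfolding mix_kernel_def divide_inverse by (intro continuous_intros)

lemma continuous_on_ln_mix_kernel [continuous_intros]:
  assumes "continuous_on S f" and "continuous_on S g"
  shows "continuous_on S (\<lambda>p. ln (mix_kernel \<sigma> (f p) (g p)))"
proof (intro continuous_on_ln continuous_intros)
  show "\<forall>p\<in>S. mix_kernel \<sigma> (f p) (g p) \<noteq> 0"
    by (metis mix_kernel_pos less_irrefl)
qed (fact assms)+

lemma minus_ln_mix_kernel_le:
  fixes w :: "(real^'n::finite)^'q::finite"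
  shows "- ln (mix_kernel \<sigma> w x) \<le> ln (real CARD('q)) + (norm (x - w $ j))\<^sup>2 / (2 * \<sigma>\<^sup>2)"
proof -
  have "(1 / real CARD('q)) * exp (- (norm (x - w $ j))\<^sup>2 / (2 * \<sigma>\<^sup>2)) \<le> mix_kernel \<sigma> w x"
    unfolding mix_kernel_def by (intro mult_left_mono member_le_sum) auto
  then have "ln ((1 / real CARD('q)) * exp (- (norm (x - w $ j))\<^sup>2 / (2 * \<sigma>\<^sup>2))) \<le> ln (mix_kernel \<sigma> w x)"
    by (subst ln_le_cancel_iff) (auto simp: mix_kernel_pos)
  then show ?thesis
    by (simp add: ln_mult ln_div)
qed

lemma
  fixes w :: "(real^'n::finite)^'q::finite"
  assumes "\<sigma> > 0"
  shows integrable_mix_density: "integrable lborel (mix_density \<sigma> w)"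
    and integral_mix_density: "(\<integral>x. mix_density \<sigma> w x \<partial>lborel) = 1"
  using assms by (simp_all add: mix_density_eq_mean_gauss_density[abs_def] integrable_gauss_density
      integral_gauss_density)

definition excess_entropy :: "real \<Rightarrow> (real^'n::finite)^'q::finite \<Rightarrow> real" where
  "excess_entropy \<sigma> w = (\<integral>x. mix_density \<sigma> w x * - ln (mix_kernel \<sigma> w x) \<partial>lborel)"

lemma mix_density_mult_minus_ln_kernel_nonneg:
  fixes w :: "(real^'n::finite)^'q::finite"
  shows "0 \<le> mix_density \<sigma> w x * - ln (mix_kernel \<sigma> w x)"
  using mix_kernel_le_1[of \<sigma> w x] mix_kernel_pos[of \<sigma> w x]
  by (intro mult_nonneg_nonneg) (simp_all add: mix_density_eq_kernel less_imp_le)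

lemma borel_measurable_mix_density_mult_minus_ln_kernel:
  fixes w :: "(real^'n::finite)^'q::finite"
  shows "(\<lambda>x. mix_density \<sigma> w x * - ln (mix_kernel \<sigma> w x)) \<in> borel_measurable lborel"
  unfolding measurable_lborel2 mix_density_eq_kernel
  by (intro borel_measurable_continuous_onI continuous_intros)

lemma
  fixes w :: "(real^'n::finite)^'q::finite"
  assumes "\<sigma> > 0"
  shows integrable_mix_density_mult_minus_ln_kernel:
      "integrable lborel (\<lambda>x. mix_density \<sigma> w x * - ln (mix_kernel \<sigma> w x))"
    and excess_entropy_nonneg: "0 \<le> excess_entropy \<sigma> w"
    and excess_entropy_le: "excess_entropy \<sigma> w \<le> ln (real CARD('q)) + 2 * 2 powr (real CARD('n) / 2)"
proof -
  define C where "C = 2 * 2 powr (real CARD('n) / 2)"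
  define bound where "bound x = (1 / real CARD('q)) *
      (\<Sum>j\<in>UNIV. ln (real CARD('q)) * gauss_density \<sigma> (w $ j) x + C * gauss_density (sqrt 2 * \<sigma>) (w $ j) x)"
    for x
  \<comment> \<open>Against the \<open>j\<close>-th component, \<open>-ln K\<^sub>w(x) \<le> ln q + |x - w\<^sub>j|\<^sup>2/(2\<sigma>\<^sup>2)\<close>, and the quadratic
    term is absorbed by the wider Gaussian of variance \<open>2\<sigma>\<^sup>2\<close>.\<close>
  have le_bound: "mix_density \<sigma> w x * - ln (mix_kernel \<sigma> w x) \<le> bound x" for x
    unfolding mix_density_eq_mean_gauss_density bound_def mult.assoc sum_distrib_right
  proof (intro mult_left_mono sum_mono)
    fix j
    have "gauss_density \<sigma> (w $ j) x * - ln (mix_kernel \<sigma> w x)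
        \<le> gauss_density \<sigma> (w $ j) x * (ln (real CARD('q)) + (norm (x - w $ j))\<^sup>2 / (2 * \<sigma>\<^sup>2))"
      using assms by (intro mult_left_mono minus_ln_mix_kernel_le) (simp add: gauss_density_pos less_imp_le)
    also have "\<dots> \<le> ln (real CARD('q)) * gauss_density \<sigma> (w $ j) x + C * gauss_density (sqrt 2 * \<sigma>) (w $ j) x"
      using gauss_density_mult_exponent_le[OF assms, of "w $ j" x] by (simp add: C_def algebra_simps)
    finally show "gauss_density \<sigma> (w $ j) x * - ln (mix_kernel \<sigma> w x)
        \<le> ln (real CARD('q)) * gauss_density \<sigma> (w $ j) x + C * gauss_density (sqrt 2 * \<sigma>) (w $ j) x" .
  qed simp
  have integrable_bound: "integrable lborel bound"
    unfolding bound_def using assms by (intro integrable_mult_right Bochner_Integration.integrable_sum Bochner_Integration.integrable_add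
        integrable_gauss_density) auto
  have integral_bound: "(\<integral>x. bound x \<partial>lborel) = ln (real CARD('q)) + C"
    unfolding bound_def using assms by (simp add: integrable_gauss_density integral_gauss_density)
  show integrable: "integrable lborel (\<lambda>x. mix_density \<sigma> w x * - ln (mix_kernel \<sigma> w x))"
  proof (rule Bochner_Integration.integrable_bound[OF integrable_bound
        borel_measurable_mix_density_mult_minus_ln_kernel], rule AE_I2)
    show "norm (mix_density \<sigma> w x * - ln (mix_kernel \<sigma> w x)) \<le> norm (bound x)" for x
      using mix_density_mult_minus_ln_kernel_nonneg[of \<sigma> w x] le_bound[of x] by simp
  qed
  show "0 \<le> excess_entropy \<sigma> w"
    unfolding excess_entropy_def by (intro integral_nonneg_AE AE_I2 mix_density_mult_minus_ln_kernel_nonneg)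
  show "excess_entropy \<sigma> w \<le> ln (real CARD('q)) + C"
    unfolding excess_entropy_def integral_bound[symmetric] by (intro integral_mono integrable integrable_bound le_bound)
qed

lemma diff_entropy_mix_density:
  fixes w :: "(real^'n::finite)^'q::finite"
  assumes "\<sigma> > 0"
  shows "diff_entropy (mix_density \<sigma> w) = real CARD('n) / 2 * ln (2 * pi * \<sigma>\<^sup>2) + excess_entropy \<sigma> w"
proof -
  define A where "A = (2 * pi * \<sigma>\<^sup>2) powr (- real CARD('n) / 2)"
  have pointwise: "mix_density \<sigma> w x * ln (mix_density \<sigma> w x)
      = ln A * mix_density \<sigma> w x - mix_density \<sigma> w x * - ln (mix_kernel \<sigma> w x)" for x
    using assms mix_kernel_pos[of \<sigma> w x] by (simp add: mix_density_eq_kernel A_def ln_mult algebra_simps)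
  have "(\<integral>x. mix_density \<sigma> w x * ln (mix_density \<sigma> w x) \<partial>lborel)
      = (\<integral>x. ln A * mix_density \<sigma> w x \<partial>lborel) - excess_entropy \<sigma> w"
    unfolding pointwise excess_entropy_def using assms
    by (intro Bochner_Integration.integral_diff integrable_mult_right integrable_mix_density
        integrable_mix_density_mult_minus_ln_kernel)
  also have "(\<integral>x. ln A * mix_density \<sigma> w x \<partial>lborel) = ln A"
    using assms by (simp add: integral_mix_density)
  also have "ln A = - (real CARD('n) / 2 * ln (2 * pi * \<sigma>\<^sup>2))"
    using assms by (simp add: A_def ln_powr)
  finally show ?thesis
    by (simp add: diff_entropy_def)
qed

lemma borel_measurable_excess_entropy:
  "excess_entropy \<sigma> \<in> borel_measurable (lborel :: ((real^'n::finite)^'q::finite) measure)"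
proof -
  have "(\<lambda>p. mix_density \<sigma> (fst p :: (real^'n)^'q) (snd p) * - ln (mix_kernel \<sigma> (fst p) (snd p)))
      \<in> borel_measurable borel"
    unfolding mix_density_eq_kernel by (intro borel_measurable_continuous_onI continuous_intros)
  then have "(\<lambda>(w, x). mix_density \<sigma> (w :: (real^'n)^'q) x * - ln (mix_kernel \<sigma> w x))
      \<in> borel_measurable (lborel \<Otimes>\<^sub>M lborel)"
    unfolding lborel_prod measurable_lborel2 by (simp add: case_prod_beta')
  then show ?thesis
    unfolding excess_entropy_def[abs_def] by (rule lborel.borel_measurable_lebesgue_integral)
qed

lemma centres_density_eq_gauss_density:
  assumes "s > 0"
  shows "centres_density s = (gauss_density s 0 :: (real^'n)^'q \<Rightarrow> real)"
  using assms by (simp add: fun_eq_iff gauss_density_eq_prod_normal_density prod_Basis_vec inner_axis centres_density_def)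

lemma continuous_on_centres_density [continuous_intros]:
  "continuous_on S f \<Longrightarrow> continuous_on S (\<lambda>p. centres_density s (f p))"
  unfolding centres_density_def normal_density_def divide_inverse by (intro continuous_intros)

lemma
  assumes "s > 0"
  shows integrable_centres_density: "integrable lborel (centres_density s :: (real^'n)^'q \<Rightarrow> real)"
    and integral_centres_density: "(\<integral>w. centres_density s (w :: (real^'n)^'q) \<partial>lborel) = 1"
  using assms by (simp_all add: centres_density_eq_gauss_density integrable_gauss_density
      integral_gauss_density)

lemma ennreal_centres_density_mult_excess_entropy:
  fixes w :: "(real^'n::finite)^'q::finite"
  assumes \<sigma>: "\<sigma> > 0" and s: "s > 0"
  shows "ennreal (centres_density s w * excess_entropy \<sigma> w)
    = (\<integral>\<^sup>+x. ennreal (centres_density s w * mix_density \<sigma> w x * - ln (mix_kernel \<sigma> w x)) \<partial>lborel)"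
proof -
  have "0 \<le> centres_density s w"
    using s by (simp add: centres_density_eq_gauss_density gauss_density_pos less_imp_le)
  then show ?thesis
    unfolding excess_entropy_def mult.assoc integral_mult_right_zero[symmetric] using \<sigma>
    by (intro nn_integral_eq_integral[symmetric] integrable_mult_right AE_I2 mult_nonneg_nonneg
        integrable_mix_density_mult_minus_ln_kernel mix_density_mult_minus_ln_kernel_nonneg)
qed

lemma integrable_centres_excess_entropy:
  assumes \<sigma>: "\<sigma> > 0" and s: "s > 0"
  shows "integrable lborel (\<lambda>w. centres_density s w * excess_entropy \<sigma> (w :: (real^'n::finite)^'q::finite))"
proof (rule Bochner_Integration.integrable_bound)
  define B where "B = ln (real CARD('q)) + 2 * 2 powr (real CARD('n) / 2)"
  show "integrable lborel (\<lambda>w. centres_density s w * B)"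
    using s by (intro integrable_mult_left integrable_centres_density)
  show "(\<lambda>w. centres_density s w * excess_entropy \<sigma> w) \<in> borel_measurable lborel"
    using s by (intro borel_measurable_times borel_measurable_excess_entropy)
      (simp add: centres_density_eq_gauss_density measurable_lborel2)
  show "AE w in lborel. norm (centres_density s w * excess_entropy \<sigma> (w :: (real^'n)^'q))
      \<le> norm (centres_density s w * B)"
  proof (rule AE_I2)
    fix w :: "(real^'n)^'q"
    show "norm (centres_density s w * excess_entropy \<sigma> w) \<le> norm (centres_density s w * B)"
      using excess_entropy_nonneg[OF \<sigma>, of w] excess_entropy_le[OF \<sigma>, of w] s
      by (simp add: B_def centres_density_eq_gauss_density gauss_density_pos less_imp_le mult_left_mono)
  qed
qed

section \<open>The quadratic form and the function \<open>F\<close>\<close>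

definition sum_sq_dev :: "'a::real_inner^'q::finite \<Rightarrow> real" where
  "sum_sq_dev y = (\<Sum>i\<in>UNIV. y $ i \<bullet> y $ i) - (\<Sum>i\<in>UNIV. y $ i) \<bullet> (\<Sum>i\<in>UNIV. y $ i) / real CARD('q)"

lemma quad_form_Mq:
  fixes y :: "(real^'n::finite)^'q::finite"
  shows "quad_form (Mq \<mu> j) y = sum_sq_dev y + \<mu> * (y $ j \<bullet> y $ j)"
proof -
  have "quad_form (Mq \<mu> j) y = (\<Sum>i\<in>UNIV. \<Sum>l\<in>UNIV. (if i = l then y $ i \<bullet> y $ l else 0)
      - (y $ i \<bullet> y $ l) / real CARD('q) + (if i = j \<and> l = j then \<mu> * (y $ i \<bullet> y $ l) else 0))"
    unfolding quad_form_def Mq_def by (intro sum.cong refl) (auto simp: algebra_simps)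
  also have "\<dots> = (\<Sum>i\<in>UNIV. \<Sum>l\<in>UNIV. (if i = l then y $ i \<bullet> y $ l else 0))
      - (\<Sum>i\<in>UNIV. \<Sum>l\<in>UNIV. y $ i \<bullet> y $ l) / real CARD('q)
      + (\<Sum>i\<in>UNIV. \<Sum>l\<in>UNIV. (if i = j \<and> l = j then \<mu> * (y $ i \<bullet> y $ l) else 0))"
    by (simp only: sum.distrib sum_subtractf sum_divide_distrib)
  also have "(\<Sum>i\<in>UNIV. \<Sum>l\<in>UNIV. (if i = j \<and> l = j then \<mu> * (y $ i \<bullet> y $ l) else 0))
      = (\<Sum>i\<in>UNIV. if i = j then (\<Sum>l\<in>UNIV. if l = j then \<mu> * (y $ i \<bullet> y $ l) else 0) else 0)"
    by (intro sum.cong) auto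
  also have "\<dots> = \<mu> * (y $ j \<bullet> y $ j)"
    by simp
  also have "(\<Sum>i\<in>UNIV. \<Sum>l\<in>UNIV. y $ i \<bullet> y $ l) = (\<Sum>i\<in>UNIV. y $ i) \<bullet> (\<Sum>i\<in>UNIV. y $ i)"
    by (simp add: inner_sum_left inner_sum_right) (rule sum.swap)
  finally show ?thesis
    by (simp add: sum_sq_dev_def)
qed

lemma sum_sq_dev_permute:
  fixes y :: "'a::real_inner^'q::finite" and p :: "'q \<Rightarrow> 'q"
  assumes "bij p"
  shows "sum_sq_dev (\<chi> l. y $ p l) = sum_sq_dev y"
  using sum.reindex_bij_betw[OF assms, of "\<lambda>i. y $ i \<bullet> y $ i"]
    sum.reindex_bij_betw[OF assms, of "\<lambda>i. y $ i"]
  by (simp add: sum_sq_dev_def)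

lemma continuous_on_quad_form [continuous_intros]:
  "continuous_on S f \<Longrightarrow> continuous_on S (\<lambda>p. quad_form M (f p))"
  unfolding quad_form_def by (intro continuous_intros)

lemma Fq_arg_pos:
  fixes y :: "(real^'n::finite)^'q::finite"
  shows "0 < (1 / real CARD('q)) * (\<Sum>l\<in>UNIV. exp (- (\<mu> / 2) * (y $ l \<bullet> y $ l)))"
  by (intro mult_pos_pos sum_pos) auto

lemma continuous_on_Fq [continuous_intros]:
  fixes f :: "'a::topological_space \<Rightarrow> (real^'n::finite)^'q::finite"
  assumes "continuous_on S f"
  shows "continuous_on S (\<lambda>p. Fq \<mu> (f p))"
  unfolding Fq_def
proof (intro continuous_on_ln continuous_intros ballI)
  fix p
  have "0 < (1 / real CARD('q)) * (\<Sum>l\<in>UNIV. exp (- (\<mu> / 2) * (f p $ l \<bullet> f p $ l)))"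
    by (rule Fq_arg_pos)
  then show "(1 / real CARD('q)) * (\<Sum>l\<in>UNIV. exp (- (\<mu> / 2) * (f p $ l \<bullet> f p $ l))) \<noteq> 0"
    by linarith
qed (rule assms)+

lemma Fq_nonpos:
  fixes y :: "(real^'n::finite)^'q::finite"
  assumes "\<mu> \<ge> 0"
  shows "Fq \<mu> y \<le> 0"
proof -
  have "(\<Sum>l\<in>UNIV. exp (- (\<mu> / 2) * (y $ l \<bullet> y $ l))) \<le> (\<Sum>l\<in>(UNIV::'q set). 1)"
    using assms by (intro sum_mono) (auto intro!: mult_nonneg_nonneg)
  then have "(1 / real CARD('q)) * (\<Sum>l\<in>UNIV. exp (- (\<mu> / 2) * (y $ l \<bullet> y $ l))) \<le> 1"
    by (simp add: field_simps)
  with Fq_arg_pos[of \<mu> y] show ?thesis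
    unfolding Fq_def by simp
qed

lemma Fq_permute:
  fixes y :: "(real^'n::finite)^'q::finite" and p :: "'q \<Rightarrow> 'q"
  assumes "bij p"
  shows "Fq \<mu> (\<chi> l. y $ p l) = Fq \<mu> y"
  using sum.reindex_bij_betw[OF assms, of "\<lambda>l. exp (- (\<mu> / 2) * (y $ l \<bullet> y $ l))"]
  by (simp add: Fq_def)

definition weighted_Fq :: "real \<Rightarrow> 'q::finite \<Rightarrow> (real^'n::finite)^'q \<Rightarrow> real" where
  "weighted_Fq \<mu> j z = exp (- (1/2) * quad_form (Mq \<mu> j) z) * Fq \<mu> z"

lemma continuous_on_weighted_Fq [continuous_intros]:
  "continuous_on S f \<Longrightarrow> continuous_on S (\<lambda>p. weighted_Fq \<mu> j (f p))"
  unfolding weighted_Fq_def by (intro continuous_intros)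

lemma borel_measurable_weighted_Fq [measurable]:
  "weighted_Fq \<mu> j \<in> borel_measurable borel"
  by (intro borel_measurable_continuous_onI continuous_intros)

lemma weighted_Fq_nonpos: "\<mu> \<ge> 0 \<Longrightarrow> weighted_Fq \<mu> j y \<le> 0"
  by (simp add: weighted_Fq_def mult_nonneg_nonpos Fq_nonpos)

lemma weighted_Fq_transpose:
  fixes y :: "(real^'n::finite)^'q::finite"
  shows "weighted_Fq \<mu> k (\<chi> l. y $ Transposition.transpose j k l) = weighted_Fq \<mu> j y"
  by (simp add: weighted_Fq_def quad_form_Mq sum_sq_dev_permute Fq_permute)

lemma nn_integral_weighted_Fq_indep:
  fixes j k :: "'q::finite"
  shows "(\<integral>\<^sup>+y. ennreal (- weighted_Fq \<mu> j (y :: (real^'n::finite)^'q)) \<partial>lborel)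
    = (\<integral>\<^sup>+y. ennreal (- weighted_Fq \<mu> k (y :: (real^'n)^'q)) \<partial>lborel)"
  using nn_integral_lborel_permute_vec[OF bij_transpose[of j k], of "\<lambda>y. ennreal (- weighted_Fq \<mu> k y)"]
  by (simp add: weighted_Fq_transpose)

lemma nn_integral_mean_weighted_Fq:
  fixes k :: "'q::finite"
  assumes "\<mu> \<ge> 0"
  shows "(\<integral>\<^sup>+y. ennreal ((1 / real CARD('q)) * (\<Sum>j\<in>UNIV. - weighted_Fq \<mu> j (y :: (real^'n::finite)^'q))) \<partial>lborel)
    = (\<integral>\<^sup>+y. ennreal (- weighted_Fq \<mu> k (y :: (real^'n)^'q)) \<partial>lborel)"
proof -
  define R where "R = (\<integral>\<^sup>+y. ennreal (- weighted_Fq \<mu> k (y :: (real^'n)^'q)) \<partial>lborel)"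
  have pointwise: "ennreal ((1 / real CARD('q)) * (\<Sum>j\<in>UNIV. - weighted_Fq \<mu> j y))
      = (\<Sum>j\<in>UNIV. ennreal (1 / real CARD('q)) * ennreal (- weighted_Fq \<mu> j y))" for y :: "(real^'n)^'q"
  proof -
    have "ennreal ((1 / real CARD('q)) * (\<Sum>j\<in>UNIV. - weighted_Fq \<mu> j y))
        = (\<Sum>j\<in>UNIV. ennreal ((1 / real CARD('q)) * - weighted_Fq \<mu> j y))"
      unfolding sum_distrib_left
      by (intro sum_ennreal[symmetric]) (simp add: divide_nonpos_pos weighted_Fq_nonpos[OF assms])
    also have "\<dots> = (\<Sum>j\<in>UNIV. ennreal (1 / real CARD('q)) * ennreal (- weighted_Fq \<mu> j y))"
      by (intro sum.cong refl ennreal_mult') simp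
    finally show ?thesis .
  qed
  have "(\<integral>\<^sup>+y. ennreal ((1 / real CARD('q)) * (\<Sum>j\<in>UNIV. - weighted_Fq \<mu> j (y :: (real^'n)^'q))) \<partial>lborel)
      = (\<Sum>j\<in>UNIV. ennreal (1 / real CARD('q)) * (\<integral>\<^sup>+y. ennreal (- weighted_Fq \<mu> j (y :: (real^'n)^'q)) \<partial>lborel))"
    unfolding pointwise by (simp add: nn_integral_sum nn_integral_cmult measurable_lborel2)
  also have "\<dots> = (\<Sum>j\<in>(UNIV::'q set). ennreal (1 / real CARD('q)) * R)"
    unfolding R_def by (intro sum.cong refl arg_cong[where f = "(*) _"] nn_integral_weighted_Fq_indep)
  also have "\<dots> = R"
    by (simp add: ennreal_of_nat_eq_real_of_nat ennreal_mult'[symmetric] mult.assoc[symmetric])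
  finally show ?thesis
    unfolding R_def .
qed

section \<open>Averaging over the centres\<close>

lemma power2_norm_const_minus_scaleR:
  fixes x :: "'a::real_inner" and y :: "'a^'q::finite"
  shows "(norm ((\<chi> l. x) - s *\<^sub>R y))\<^sup>2 =
    real CARD('q) * (norm (x - (s / real CARD('q)) *\<^sub>R (\<Sum>l\<in>UNIV. y $ l)))\<^sup>2 + s\<^sup>2 * sum_sq_dev y"
proof -
  define Y where "Y = (\<Sum>l\<in>UNIV. y $ l)"
  define Q where "Q = real CARD('q)"
  have "Q > 0" by (simp add: Q_def)
  have "(norm ((\<chi> l. x) - s *\<^sub>R y))\<^sup>2 = (\<Sum>l\<in>UNIV. (norm (x - s *\<^sub>R y $ l))\<^sup>2)"
    by (simp add: power2_norm_eq_inner inner_vec_def)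
  also have "\<dots> = (\<Sum>l\<in>UNIV. x \<bullet> x - 2 * s * (x \<bullet> y $ l) + s\<^sup>2 * (y $ l \<bullet> y $ l))"
    unfolding power2_norm_eq_inner
    by (intro sum.cong refl) (simp add: inner_diff_left inner_diff_right inner_commute algebra_simps power2_eq_square)
  also have "\<dots> = Q * (x \<bullet> x) - 2 * s * (x \<bullet> Y) + s\<^sup>2 * (\<Sum>l\<in>UNIV. y $ l \<bullet> y $ l)"
    by (simp add: sum.distrib sum_subtractf sum_distrib_left inner_sum_right Y_def Q_def)
  also have "\<dots> = Q * (norm (x - (s / Q) *\<^sub>R Y))\<^sup>2 + s\<^sup>2 * sum_sq_dev y"
    using \<open>Q > 0\<close> unfolding power2_norm_eq_inner sum_sq_dev_def Y_def[symmetric] Q_def[symmetric]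
    by (simp add: inner_diff_left inner_diff_right inner_commute field_simps power2_eq_square)
  finally show ?thesis by (simp add: Y_def Q_def)
qed

lemma mix_kernel_const_minus_scaleR:
  fixes x :: "real^'n::finite" and y :: "(real^'n)^'q::finite"
  assumes "\<sigma> > 0" and "\<mu> = s\<^sup>2 / \<sigma>\<^sup>2"
  shows "mix_kernel \<sigma> ((\<chi> l. x) - s *\<^sub>R y) x
    = (1 / real CARD('q)) * (\<Sum>j\<in>UNIV. exp (- (\<mu> / 2) * (y $ j \<bullet> y $ j)))"
  unfolding mix_kernel_def using assms
  by (intro arg_cong[where f = "\<lambda>z. (1 / real CARD('q)) * z"] sum.cong refl)
     (simp add: dot_square_norm power_mult_distrib field_simps)

lemma powr_substitution_constant:
  fixes s \<sigma> :: real and q n :: nat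
  assumes "s > 0" and "\<sigma> > 0" and "q > 0"
  shows "s ^ (q * n) * (2 * pi * s\<^sup>2) powr (- real (q * n) / 2) * (2 * pi * \<sigma>\<^sup>2) powr (- real n / 2)
    = (s\<^sup>2 / \<sigma>\<^sup>2 / real q) powr (real n / 2) * (2 * pi) powr (- real q * real n / 2)
      * (2 * pi * (s / sqrt (real q))\<^sup>2) powr (- real n / 2)"
proof -
  have "s ^ (q * n) * (2 * pi * s\<^sup>2) powr (- real (q * n) / 2) = (2 * pi) powr (- real q * real n / 2)"
  proof -
    have "(s\<^sup>2) powr (- real (q * n) / 2) = (1 / s) ^ (q * n)"
      using inverse_sqrt_power_eq_powr[of "s\<^sup>2" "q * n"] assms by simp
    then show ?thesis
      using assms by (simp add: powr_mult power_mult_distrib[symmetric])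
  qed
  moreover have "(2 * pi * \<sigma>\<^sup>2) powr (- real n / 2)
      = (s\<^sup>2 / \<sigma>\<^sup>2 / real q) powr (real n / 2) * (2 * pi * (s / sqrt (real q))\<^sup>2) powr (- real n / 2)"
  proof -
    have "2 * pi * \<sigma>\<^sup>2 = (2 * pi * (s / sqrt (real q))\<^sup>2) / (s\<^sup>2 / \<sigma>\<^sup>2 / real q)"
      using assms by (simp add: power_divide)
    then show ?thesis
      using assms by (simp add: powr_divide powr_minus_divide powr_mult)
  qed
  ultimately show ?thesis
    by (simp add: ac_simps)
qed

lemma centres_mix_density_substitution:
  fixes x :: "real^'n::finite" and y :: "(real^'n)^'q::finite"
  assumes "\<sigma> > 0" and "s > 0" and \<mu>: "\<mu> = s\<^sup>2 / \<sigma>\<^sup>2"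
  defines "w \<equiv> (\<chi> l. x) - s *\<^sub>R y"
  shows "s ^ (CARD('q) * CARD('n)) * (centres_density s w * mix_density \<sigma> w x * - ln (mix_kernel \<sigma> w x))
    = (\<mu> / real CARD('q)) powr (real CARD('n) / 2) * (2 * pi) powr (- real CARD('q) * real CARD('n) / 2)
      * gauss_density (s / sqrt (real CARD('q))) ((s / real CARD('q)) *\<^sub>R (\<Sum>l\<in>UNIV. y $ l)) x
      * ((1 / real CARD('q)) * (\<Sum>j\<in>UNIV. - weighted_Fq \<mu> j y))"
proof -
  define Q where "Q = real CARD('q)"
  define m where "m = (s / Q) *\<^sub>R (\<Sum>l\<in>UNIV. y $ l)"
  define E where "E = exp (- (norm (x - m))\<^sup>2 / (2 * (s / sqrt Q)\<^sup>2))"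
  define S where "S = (1 / Q) * (\<Sum>j\<in>UNIV. exp (- (\<mu> / 2) * (y $ j \<bullet> y $ j)))"
  define D where "D = exp (- sum_sq_dev y / 2)"
  have "Q > 0" by (simp add: Q_def)
  have centres: "centres_density s w = (2 * pi * s\<^sup>2) powr (- real (CARD('q) * CARD('n)) / 2) * (D * E)"
  proof -
    have "exp (- (norm w)\<^sup>2 / (2 * s\<^sup>2)) = D * E"
      unfolding D_def E_def mult_exp_exp w_def power2_norm_const_minus_scaleR m_def Q_def[symmetric]
      using assms \<open>Q > 0\<close> by (simp add: field_simps)
    then show ?thesis
      using assms by (simp add: centres_density_eq_gauss_density gauss_density_def)
  qed
  have kernel: "mix_kernel \<sigma> w x = S"
    unfolding w_def S_def Q_def by (rule mix_kernel_const_minus_scaleR[OF assms(1) \<mu>])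
  have mix: "mix_density \<sigma> w x = (2 * pi * \<sigma>\<^sup>2) powr (- real CARD('n) / 2) * S"
    by (simp add: mix_density_eq_kernel kernel)
  have F: "ln S = Fq \<mu> y"
    by (simp add: S_def Q_def Fq_def)
  have quad: "(1 / Q) * (\<Sum>j\<in>UNIV. - weighted_Fq \<mu> j y) = D * S * - Fq \<mu> y"
    by (simp add: weighted_Fq_def quad_form_Mq D_def S_def exp_add[symmetric] sum_distrib_left sum_distrib_right
        algebra_simps)
  have gauss: "gauss_density (s / sqrt Q) m x = (2 * pi * (s / sqrt Q)\<^sup>2) powr (- real CARD('n) / 2) * E"
    by (simp add: gauss_density_def E_def)
  have const: "s ^ (CARD('q) * CARD('n)) * (2 * pi * s\<^sup>2) powr (- real (CARD('q) * CARD('n)) / 2)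
      * (2 * pi * \<sigma>\<^sup>2) powr (- real CARD('n) / 2)
    = (\<mu> / Q) powr (real CARD('n) / 2) * (2 * pi) powr (- real CARD('q) * real CARD('n) / 2)
      * (2 * pi * (s / sqrt Q)\<^sup>2) powr (- real CARD('n) / 2)"
    unfolding \<mu> Q_def using assms by (intro powr_substitution_constant) auto
  have "s ^ (CARD('q) * CARD('n)) * (centres_density s w * mix_density \<sigma> w x * - ln (mix_kernel \<sigma> w x))
      = (s ^ (CARD('q) * CARD('n)) * (2 * pi * s\<^sup>2) powr (- real (CARD('q) * CARD('n)) / 2)
        * (2 * pi * \<sigma>\<^sup>2) powr (- real CARD('n) / 2)) * E * (D * S * - Fq \<mu> y)"
    by (simp add: centres mix kernel F ac_simps)
  also have "\<dots> = (\<mu> / Q) powr (real CARD('n) / 2) * (2 * pi) powr (- real CARD('q) * real CARD('n) / 2)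
      * ((2 * pi * (s / sqrt Q)\<^sup>2) powr (- real CARD('n) / 2) * E) * (D * S * - Fq \<mu> y)"
    unfolding const by (simp only: ac_simps)
  also have "\<dots> = (\<mu> / Q) powr (real CARD('n) / 2) * (2 * pi) powr (- real CARD('q) * real CARD('n) / 2)
      * gauss_density (s / sqrt Q) m x * ((1 / Q) * (\<Sum>j\<in>UNIV. - weighted_Fq \<mu> j y))"
    unfolding gauss quad ..
  finally show ?thesis
    by (simp add: Q_def m_def)
qed

lemma nn_integral_centres_mix_density_substitution:
  fixes x :: "real^'n::finite"
  assumes \<sigma>: "\<sigma> > 0" and s: "s > 0" and \<mu>: "\<mu> = s\<^sup>2 / \<sigma>\<^sup>2"
  shows "(\<integral>\<^sup>+w. ennreal (centres_density s (w :: (real^'n)^'q::finite) * mix_density \<sigma> w x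
        * - ln (mix_kernel \<sigma> w x)) \<partial>lborel)
    = (\<integral>\<^sup>+y. ennreal ((\<mu> / real CARD('q)) powr (real CARD('n) / 2)
        * (2 * pi) powr (- real CARD('q) * real CARD('n) / 2)
        * gauss_density (s / sqrt (real CARD('q))) ((s / real CARD('q)) *\<^sub>R (\<Sum>l\<in>UNIV. y $ l)) x
        * ((1 / real CARD('q)) * (\<Sum>j\<in>UNIV. - weighted_Fq \<mu> j (y :: (real^'n)^'q)))) \<partial>lborel)"
proof -
  define \<Phi> where "\<Phi> w = centres_density s w * mix_density \<sigma> w x * - ln (mix_kernel \<sigma> w x)"
    for w :: "(real^'n)^'q"
  have "(\<lambda>w. ennreal (\<Phi> w)) \<in> borel_measurable borel"
    unfolding \<Phi>_def mix_density_eq_kernel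
    by (intro measurable_compose[OF _ measurable_ennreal] borel_measurable_continuous_onI continuous_intros)
  from nn_integral_lborel_affine[OF this, of "- s" "\<chi> l. x"] s
  have "(\<integral>\<^sup>+w. ennreal (\<Phi> w) \<partial>lborel)
      = ennreal (s ^ (CARD('q) * CARD('n))) * (\<integral>\<^sup>+y. ennreal (\<Phi> ((\<chi> l. x) - s *\<^sub>R y)) \<partial>lborel)"
    by simp
  also have "\<dots> = (\<integral>\<^sup>+y. ennreal (s ^ (CARD('q) * CARD('n))) * ennreal (\<Phi> ((\<chi> l. x) - s *\<^sub>R y)) \<partial>lborel)"
    unfolding \<Phi>_def mix_density_eq_kernel
    by (intro nn_integral_cmult[symmetric])
       (unfold measurable_lborel2, intro measurable_compose[OF _ measurable_ennreal]
        borel_measurable_continuous_onI continuous_intros)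
  also have "\<dots> = (\<integral>\<^sup>+y. ennreal (s ^ (CARD('q) * CARD('n)) * \<Phi> ((\<chi> l. x) - s *\<^sub>R y)) \<partial>lborel)"
    using s by (simp add: ennreal_mult')
  finally show ?thesis
    unfolding \<Phi>_def centres_mix_density_substitution[OF \<sigma> s \<mu>] .
qed

lemma nn_integral_centres_excess_entropy:
  fixes jq :: "'q::finite"
  assumes \<sigma>: "\<sigma> > 0" and s: "s > 0" and \<mu>: "\<mu> = s\<^sup>2 / \<sigma>\<^sup>2"
  shows "(\<integral>\<^sup>+w. ennreal (centres_density s w * excess_entropy \<sigma> (w :: (real^'n::finite)^'q)) \<partial>lborel)
    = ennreal ((\<mu> / real CARD('q)) powr (real CARD('n) / 2) * (2 * pi) powr (- real CARD('q) * real CARD('n) / 2))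
      * (\<integral>\<^sup>+y. ennreal (- weighted_Fq \<mu> jq (y :: (real^'n)^'q)) \<partial>lborel)"
proof -
  define K where "K = (\<mu> / real CARD('q)) powr (real CARD('n) / 2) * (2 * pi) powr (- real CARD('q) * real CARD('n) / 2)"
  define \<Phi> where "\<Phi> w x = centres_density s w * mix_density \<sigma> w x * - ln (mix_kernel \<sigma> w x)"
    for w :: "(real^'n)^'q" and x
  define m where "m y = (s / real CARD('q)) *\<^sub>R (\<Sum>l\<in>UNIV. y $ l)" for y :: "(real^'n)^'q"
  define H where "H y = (1 / real CARD('q)) * (\<Sum>j\<in>UNIV. - weighted_Fq \<mu> j y)" for y :: "(real^'n)^'q"
  define g where "g x y = K * gauss_density (s / sqrt (real CARD('q))) (m y) x * H y" for x y
  have "K > 0" "\<mu> \<ge> 0"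
    using \<sigma> s by (simp_all add: K_def \<mu>)
  have H_nonneg: "0 \<le> H y" for y
    unfolding H_def
    by (intro mult_nonneg_nonneg sum_nonneg) (simp_all add: weighted_Fq_nonpos[OF \<open>\<mu> \<ge> 0\<close>])
  have excess: "ennreal (centres_density s w * excess_entropy \<sigma> w) = (\<integral>\<^sup>+x. ennreal (\<Phi> w x) \<partial>lborel)" for w
    unfolding \<Phi>_def by (rule ennreal_centres_density_mult_excess_entropy[OF \<sigma> s])
  have substitution: "(\<integral>\<^sup>+w. ennreal (\<Phi> w x) \<partial>lborel) = (\<integral>\<^sup>+y. ennreal (g x y) \<partial>lborel)" for x
    unfolding \<Phi>_def g_def K_def m_def H_def by (rule nn_integral_centres_mix_density_substitution[OF \<sigma> s \<mu>])
  have gauss: "(\<integral>\<^sup>+x. ennreal (g x y) \<partial>lborel) = ennreal (K * H y)" for y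
  proof -
    have "(\<integral>\<^sup>+x. ennreal (g x y) \<partial>lborel)
        = (\<integral>\<^sup>+x. ennreal (K * H y) * ennreal (gauss_density (s / sqrt (real CARD('q))) (m y) x) \<partial>lborel)"
      unfolding g_def using \<open>K > 0\<close> H_nonneg by (intro nn_integral_cong) (simp add: ennreal_mult'[symmetric] ac_simps)
    also have "\<dots> = ennreal (K * H y)"
      using s by (simp add: nn_integral_cmult nn_integral_gauss_density measurable_lborel2)
    finally show ?thesis .
  qed
  have "(\<integral>\<^sup>+w. ennreal (centres_density s w * excess_entropy \<sigma> (w :: (real^'n)^'q)) \<partial>lborel)
      = (\<integral>\<^sup>+w. (\<integral>\<^sup>+x. ennreal (\<Phi> w x) \<partial>lborel) \<partial>lborel)"
    by (simp add: excess)
  also have "\<dots> = (\<integral>\<^sup>+x. (\<integral>\<^sup>+w. ennreal (\<Phi> w x) \<partial>lborel) \<partial>lborel)"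
    by (rule nn_integral_lborel_swap_continuous[where f = "\<lambda>x w. \<Phi> w x"])
       (unfold \<Phi>_def mix_density_eq_kernel, intro continuous_intros)
  also have "\<dots> = (\<integral>\<^sup>+x. (\<integral>\<^sup>+y. ennreal (g x y) \<partial>lborel) \<partial>lborel)"
    by (simp add: substitution)
  also have "\<dots> = (\<integral>\<^sup>+y. (\<integral>\<^sup>+x. ennreal (g x y) \<partial>lborel) \<partial>lborel)"
    by (rule nn_integral_lborel_swap_continuous[symmetric])
       (unfold g_def H_def m_def, intro continuous_intros)
  also have "\<dots> = (\<integral>\<^sup>+y. ennreal K * ennreal (H y) \<partial>lborel)"
    using \<open>K > 0\<close> by (simp add: gauss ennreal_mult')
  also have "\<dots> = ennreal K * (\<integral>\<^sup>+y. ennreal (H y) \<partial>lborel)"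
    unfolding H_def
    by (intro nn_integral_cmult)
       (unfold measurable_lborel2, intro measurable_compose[OF _ measurable_ennreal]
        borel_measurable_continuous_onI continuous_intros)
  also have "(\<integral>\<^sup>+y. ennreal (H y) \<partial>lborel) = (\<integral>\<^sup>+y. ennreal (- weighted_Fq \<mu> jq (y :: (real^'n)^'q)) \<partial>lborel)"
    unfolding H_def by (rule nn_integral_mean_weighted_Fq[OF \<open>\<mu> \<ge> 0\<close>])
  finally show ?thesis
    unfolding K_def .
qed

lemma integral_centres_excess_entropy:
  fixes jq :: "'q::finite"
  assumes \<sigma>: "\<sigma> > 0" and s: "s > 0" and \<mu>: "\<mu> = s\<^sup>2 / \<sigma>\<^sup>2"
  shows "(\<integral>w. centres_density s w * excess_entropy \<sigma> (w :: (real^'n::finite)^'q) \<partial>lborel)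
    = - ((\<mu> / real CARD('q)) powr (real CARD('n) / 2) * (2 * pi) powr (- real CARD('q) * real CARD('n) / 2)
      * (\<integral>y. weighted_Fq \<mu> jq (y :: (real^'n)^'q) \<partial>lborel))"
proof -
  define K where "K = (\<mu> / real CARD('q)) powr (real CARD('n) / 2) * (2 * pi) powr (- real CARD('q) * real CARD('n) / 2)"
  define f where "f w = centres_density s w * excess_entropy \<sigma> w" for w :: "(real^'n)^'q"
  have "K > 0" "\<mu> \<ge> 0"
    using \<sigma> s by (simp_all add: K_def \<mu>)
  have f_nonneg: "0 \<le> f w" for w
    unfolding f_def using s
    by (intro mult_nonneg_nonneg excess_entropy_nonneg[OF \<sigma>])
       (simp add: centres_density_eq_gauss_density gauss_density_pos less_imp_le)
  have f_integrable: "integrable lborel f"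
    unfolding f_def[abs_def] by (rule integrable_centres_excess_entropy[OF \<sigma> s])
  define h where "h y = - weighted_Fq \<mu> jq y" for y :: "(real^'n)^'q"
  have h_nonneg: "0 \<le> h y" for y
    unfolding h_def using weighted_Fq_nonpos[OF \<open>\<mu> \<ge> 0\<close>] by simp
  have "ennreal (\<integral>w. f w \<partial>lborel) = (\<integral>\<^sup>+w. ennreal (f w) \<partial>lborel)"
    using f_integrable f_nonneg by (intro nn_integral_eq_integral[symmetric]) auto
  also have "\<dots> = ennreal K * (\<integral>\<^sup>+y. ennreal (h y) \<partial>lborel)"
    unfolding f_def h_def K_def by (rule nn_integral_centres_excess_entropy[OF \<sigma> s \<mu>])
  finally have nn: "ennreal (\<integral>w. f w \<partial>lborel) = ennreal K * (\<integral>\<^sup>+y. ennreal (h y) \<partial>lborel)" .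
  have h_integrable: "integrable lborel h"
  proof (rule integrableI_nonneg)
    show "h \<in> borel_measurable lborel"
      unfolding h_def measurable_lborel2 by (intro borel_measurable_continuous_onI continuous_intros)
    have "ennreal K * (\<integral>\<^sup>+y. ennreal (h y) \<partial>lborel) < \<infinity>"
      unfolding nn[symmetric] by simp
    then show "(\<integral>\<^sup>+y. ennreal (h y) \<partial>lborel) < \<infinity>"
      using \<open>K > 0\<close> by (auto simp: ennreal_mult_less_top)
  qed (use h_nonneg in auto)
  have "ennreal (\<integral>w. f w \<partial>lborel) = ennreal (K * (\<integral>y. h y \<partial>lborel))"
    unfolding nn using \<open>K > 0\<close> h_integrable h_nonneg
    by (simp add: nn_integral_eq_integral ennreal_mult')
  then have "(\<integral>w. f w \<partial>lborel) = K * (\<integral>y. h y \<partial>lborel)"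
    using \<open>K > 0\<close> f_nonneg h_nonneg by (simp add: integral_nonneg_AE)
  then show ?thesis
    by (simp add: f_def h_def K_def)
qed

theorem corollary1:
  fixes \<sigma> s \<mu> :: real and jq :: "'q::finite"
  assumes "\<sigma> > 0" and "s > 0" and "\<mu> = s\<^sup>2 / \<sigma>\<^sup>2"
  shows "cond_entropy \<sigma> s TYPE('n::finite) TYPE('q) =
           real CARD('n) / 2 * ln (2 * pi * \<sigma>\<^sup>2)
           - (\<mu> / real CARD('q)) powr (real CARD('n) / 2)
             * (2 * pi) powr (- real CARD('q) * real CARD('n) / 2)
             * (\<integral>z. exp (- (1/2) * quad_form (Mq \<mu> jq) (z :: (real^'n)^'q)) * Fq \<mu> z \<partial>lborel)"
proof -
  define L where "L = real CARD('n) / 2 * ln (2 * pi * \<sigma>\<^sup>2)"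
  have "cond_entropy \<sigma> s TYPE('n) TYPE('q)
      = (\<integral>w. centres_density s w * L + centres_density s w * excess_entropy \<sigma> (w :: (real^'n)^'q) \<partial>lborel)"
    unfolding cond_entropy_def L_def using assms(1) by (simp add: diff_entropy_mix_density distrib_left)
  also have "\<dots> = L + (\<integral>w. centres_density s w * excess_entropy \<sigma> (w :: (real^'n)^'q) \<partial>lborel)"
    using assms(1,2) by (simp add: integrable_centres_density integral_centres_density
        integrable_centres_excess_entropy)
  finally show ?thesis
    using integral_centres_excess_entropy[OF assms, of jq]
    by (simp add: L_def weighted_Fq_def)
qed

end
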